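(* In the troll-farm voting model described in the context, fix a type $x\in(0,\tfrac12)\cup(\tfrac12,1)$ and suppose the sender is constrained to choose $\alpha_x\le\bar\alpha_x$, where $\bar\alpha_x<\alpha_x^*$. Then the sender optimally chooses the mass of trolls $\alpha_x^{C}=\bar\alpha_x$. Moreover: (i) if $x<\tfrac12$, the sender optimally chooses the density of trolls' messages $$\tilde f_x^{C}(s)=\begin{cases}\dfrac{1-\bar\alpha_x}{\bar\alpha_x}\kappa_x'(s) & \text{for } s\in[\hat s(x),s^*(x)],\\[1mm] 0 & \text{for } s\notin[\hat s(x),s^*(x)],\end{cases}$$ for some uniquely determined $\hat s(x)<s^*(x)$; (ii) if $x>\tfrac12$, there are multiple optimal densities of trolls' messages, and these include the density $\tilde f_x^*$ given by $\tilde f_x^*(s)=0$ for $s<s^*(x)$ and $\tilde f_x^*(s)=\frac{1-\alpha_x^*}{\alpha_x^*}\kappa_x'(s)$ for $s\ge s^*(x)$.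
   Context: Model. There is an unknown state $\theta\in\{0,1\}$, each state having prior probability $\tfrac12$. There is a continuum of voters of mass one; each voter has a type $x\in\mathbb{R}$, types being distributed according to a cdf $H$ with density $h$ having full support on $\mathbb{R}$. A voter of type $x$ who votes for the government receives payoff $1-x$ if $\theta=1$ and $-x$ if $\theta=0$; voting against gives payoff $0$. In state $\theta$, each voter independently draws an informative signal $s\in\mathbb{R}$ from a cdf $F_\theta$ with density $f_\theta$ having full support on $\mathbb{R}$, where $f_0(0)=f_1(0)$ and $m(s)=f_1(s)/f_0(s)$ is strictly increasing. For $x\in(0,1)$ let $s^*(x)=m^{-1}\!\left(\frac{x}{1-x}\right)$. A sender chooses, for each type $x$, $\alpha_x\in[0,\bar\alpha_x]$ (mass of trolls, capped by a given $\bar\alpha_x\in[0,1]$) and a probability distribution $\tilde F_x$ with density $\tilde f_x$ (trolls' messages, not depending on the state). A voter of type $x$ observes, with probability $1-\alpha_x$, her informative signal, and with probability $\alpha_x$ a message drawn from $\tilde F_x$, without knowing which; after observing $s$ her posterior is $$\pi_x(s)=\frac{(1-\alpha_x)f_1(s)+\alpha_x\tilde f_x(s)}{(1-\alpha_x)f_1(s)+\alpha_x\tilde f_x(s)+(1-\alpha_x)f_0(s)+\alpha_x\tilde f_x(s)},$$ and she votes for the government iff $\pi_x(s)\ge x$. Her probability of voting for the government in state $\theta$ is $p_\theta(x)=\int_{\{s:\pi_x(s)\ge x\}}[(1-\alpha_x)f_\theta(s)+\alpha_x\tilde f_x(s)]\,ds$, and the vote share is $V_\theta=\int p_\theta(x)\,dH(x)$.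 The sender's payoff is $u(V_\theta)$, $u$ strictly increasing; she maximises $\tfrac12u(V_0)+\tfrac12u(V_1)$, and among choices with the same vote shares in both states prefers pointwise-smaller $\alpha$ (strictly smaller for some $x$). Notation: for $x\ne\tfrac12$, $\kappa_x(s)=\frac{xF_0(s)-(1-x)F_1(s)}{1-2x}$ with derivative $\kappa_x'$ in $s$; $\alpha_x^*=\frac{\kappa_x[s^*(x)]}{\kappa_x[s^*(x)]+1}$ for $x\in(0,\tfrac12)$ and $\alpha_x^*=\frac{\kappa_x[s^*(x)]+1}{\kappa_x[s^*(x)]}$ for $x\in(\tfrac12,1)$ (the optimal mass of trolls when there is no cap). *)

theory Defs
  imports "HOL-Analysis.Analysis"
begin

definition cdf :: "(real \<Rightarrow> real) \<Rightarrow> real \<Rightarrow> real" where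
  "cdf f s = (LINT t:{..s}|lborel. f t)"

definition lr :: "(real \<Rightarrow> real) \<Rightarrow> (real \<Rightarrow> real) \<Rightarrow> real \<Rightarrow> real" where
  "lr f0 f1 s = f1 s / f0 s"

definition s_star :: "(real \<Rightarrow> real) \<Rightarrow> (real \<Rightarrow> real) \<Rightarrow> real \<Rightarrow> real" where
  "s_star f0 f1 x = (THE s. lr f0 f1 s = x / (1 - x))"

definition kappa :: "(real \<Rightarrow> real) \<Rightarrow> (real \<Rightarrow> real) \<Rightarrow> real \<Rightarrow> real \<Rightarrow> real" where
  "kappa f0 f1 x s = (x * cdf f0 s - (1 - x) * cdf f1 s) / (1 - 2 * x)"

text \<open>The derivative of kappa in s (written out: F0' = f0, F1' = f1).\<close>
definition kappa' :: "(real \<Rightarrow> real) \<Rightarrow> (real \<Rightarrow> real) \<Rightarrow> real \<Rightarrow> real \<Rightarrow> real" where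
  "kappa' f0 f1 x s = (x * f0 s - (1 - x) * f1 s) / (1 - 2 * x)"

definition alpha_star :: "(real \<Rightarrow> real) \<Rightarrow> (real \<Rightarrow> real) \<Rightarrow> real \<Rightarrow> real" where
  "alpha_star f0 f1 x =
     (let k = kappa f0 f1 x (s_star f0 f1 x) in
      if x < 1/2 then k / (k + 1) else (k + 1) / k)"

definition is_density :: "(real \<Rightarrow> real) \<Rightarrow> bool" where
  "is_density g \<longleftrightarrow> g \<in> borel_measurable borel \<and> (\<forall>s. 0 \<le> g s)
     \<and> integrable lborel g \<and> integral\<^sup>L lborel g = 1"

text \<open>Standing assumptions on the signal densities: full support, f0(0) = f1(0),
  strictly increasing likelihood ratio m whose inverse is defined on (0,inf)
  (needed for s*(x) to be defined for every x in (0,1)).\<close>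
definition signal_model :: "(real \<Rightarrow> real) \<Rightarrow> (real \<Rightarrow> real) \<Rightarrow> bool" where
  "signal_model f0 f1 \<longleftrightarrow> is_density f0 \<and> is_density f1
     \<and> (\<forall>s. 0 < f0 s \<and> 0 < f1 s) \<and> f0 0 = f1 0
     \<and> strict_mono (lr f0 f1) \<and> (\<forall>y>0. \<exists>s. lr f0 f1 s = y)"

definition posterior :: "(real \<Rightarrow> real) \<Rightarrow> (real \<Rightarrow> real) \<Rightarrow> real \<Rightarrow> (real \<Rightarrow> real) \<Rightarrow> real \<Rightarrow> real" where
  "posterior f0 f1 a g s =
     ((1 - a) * f1 s + a * g s) / ((1 - a) * f1 s + a * g s + (1 - a) * f0 s + a * g s)"

text \<open>Probability p_theta(x) that type x votes for the government; ftheta is f0 or f1.\<close>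
definition vote_prob :: "(real \<Rightarrow> real) \<Rightarrow> (real \<Rightarrow> real) \<Rightarrow> real \<Rightarrow> real \<Rightarrow> (real \<Rightarrow> real)
    \<Rightarrow> (real \<Rightarrow> real) \<Rightarrow> real" where
  "vote_prob f0 f1 x a g ftheta =
     (LINT s:{s. x \<le> posterior f0 f1 a g s}|lborel. (1 - a) * ftheta s + a * g s)"

definition admissible :: "real \<Rightarrow> real \<Rightarrow> (real \<Rightarrow> real) \<Rightarrow> bool" where
  "admissible abar a g \<longleftrightarrow> 0 \<le> a \<and> a \<le> abar \<and> is_density g"

text \<open>Optimality of the choice (a, g) for type x under cap abar: it maximizes the
  voting probability of type x in both states (which is what maximizing
  1/2 u(V0) + 1/2 u(V1) amounts to type by type), and among choices with the
  same voting probabilities no strictly smaller troll mass is possible.\<close>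
definition optimal :: "(real \<Rightarrow> real) \<Rightarrow> (real \<Rightarrow> real) \<Rightarrow> real \<Rightarrow> real \<Rightarrow> real \<Rightarrow> (real \<Rightarrow> real) \<Rightarrow> bool" where
  "optimal f0 f1 x abar a g \<longleftrightarrow> admissible abar a g
     \<and> (\<forall>a' g'. admissible abar a' g' \<longrightarrow>
          vote_prob f0 f1 x a' g' f0 \<le> vote_prob f0 f1 x a g f0
        \<and> vote_prob f0 f1 x a' g' f1 \<le> vote_prob f0 f1 x a g f1)
     \<and> \<not> (\<exists>a' g'. admissible abar a' g'
          \<and> vote_prob f0 f1 x a' g' f0 = vote_prob f0 f1 x a g f0
          \<and> vote_prob f0 f1 x a' g' f1 = vote_prob f0 f1 x a g f1
          \<and> a' < a)"

definition f_C :: "(real \<Rightarrow> real) \<Rightarrow> (real \<Rightarrow> real) \<Rightarrow> real \<Rightarrow> real \<Rightarrow> real \<Rightarrow> real \<Rightarrow> real" where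
  "f_C f0 f1 x abar sh s =
     (if sh \<le> s \<and> s \<le> s_star f0 f1 x then (1 - abar) / abar * kappa' f0 f1 x s else 0)"

definition f_star :: "(real \<Rightarrow> real) \<Rightarrow> (real \<Rightarrow> real) \<Rightarrow> real \<Rightarrow> real \<Rightarrow> real" where
  "f_star f0 f1 x s =
     (if s < s_star f0 f1 x then 0
      else (1 - alpha_star f0 f1 x) / alpha_star f0 f1 x * kappa' f0 f1 x s)"

end

theory Submission
  imports Defs
begin

(* Write k for kappa'_x; it changes sign exactly at s*(x) because the likelihood ratio is
   increasing. A voter of type x who sees message s is persuaded iff (1 - a) k(s) <= a g(s)
   when x < 1/2, and iff a g(s) <= (1 - a) k(s) when x > 1/2.

   For x > 1/2 only messages s >= s*(x) can persuade, so in state theta the voter supports the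
   government with probability at most 1 - (1 - a) F_theta(s*(x)). Every troll density on
   [s*(x), infinity) all of whose messages persuade attains this bound; since abar < alpha*_x,
   f* persuades with room to spare and can be perturbed without losing optimality.

   For x < 1/2 the trolls must send density at least (1 - a)/a k on the signals below s*(x)
   that they turn, so their unit budget bounds the k-mass of that set by a/(1 - a). As
   f_theta/k increases there, the unpersuaded set of least F_theta-probability is a left ray
   (-infinity, s_hat] (Neyman-Pearson). Pricing the budget with a Lagrange multiplier turns
   this into a pointwise nonnegative slack whose integral is the shortfall from the bound
   1 - (1 - abar) F_theta(s_hat); this shows that f^C is optimal and, up to null sets, the only
   optimum. In both cases the bound increases strictly with the troll mass, so the cap binds. *)

lemma set_integrable_lborel [intro]:
  fixes h :: "real \<Rightarrow> real"
  assumes "A \<in> sets borel" "integrable lborel h"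
  shows "set_integrable lborel A h"
  unfolding set_integrable_def using assms by (intro integrable_mult_indicator) auto

lemma has_bochner_integral_indicator_mult:
  fixes h :: "real \<Rightarrow> real"
  assumes "A \<in> sets borel" "integrable lborel h"
  shows "has_bochner_integral lborel (\<lambda>s. indicator A s * h s) (LINT s:A|lborel. h s)"
  using has_bochner_integral_integrable[OF set_integrable_lborel[OF assms, unfolded set_integrable_def]]
  by (simp add: set_lebesgue_integral_def)

lemma set_integral_add_Compl:
  fixes h :: "real \<Rightarrow> real"
  assumes "A \<in> sets borel" "integrable lborel h"
  shows "(LINT s:A|lborel. h s) + (LINT s:-A|lborel. h s) = integral\<^sup>L lborel h"
proof -
  have "(LINT s:A|lborel. h s) + (LINT s:-A|lborel. h s) = (LINT s:A \<union> -A|lborel. h s)"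
    using assms by (intro set_integral_Un[symmetric] set_integrable_lborel) auto
  then show ?thesis by (simp add: set_lebesgue_integral_def)
qed

lemma set_integral_nonneg:
  fixes h :: "'a \<Rightarrow> real"
  assumes "\<And>s. s \<in> A \<Longrightarrow> 0 \<le> h s"
  shows "0 \<le> (LINT s:A|M. h s)"
  unfolding set_lebesgue_integral_def using assms
  by (intro integral_nonneg_AE) (auto simp: indicator_def)

lemma set_integral_mono_set_lborel:
  fixes h :: "real \<Rightarrow> real"
  assumes "A \<in> sets borel" "B \<in> sets borel" "A \<subseteq> B" "integrable lborel h"
    and "\<And>s. s \<in> B \<Longrightarrow> 0 \<le> h s"
  shows "(LINT s:A|lborel. h s) \<le> (LINT s:B|lborel. h s)"
  unfolding set_lebesgue_integral_def
  using set_integrable_lborel[OF assms(1,4)] set_integrable_lborel[OF assms(2,4)] assms(3,5)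
  by (intro integral_mono) (auto simp: set_integrable_def indicator_def)

lemma set_integral_pos_lborel:
  fixes h :: "real \<Rightarrow> real"
  assumes A: "A \<in> sets borel" and h: "integrable lborel h" and nonneg: "\<And>s. s \<in> A \<Longrightarrow> 0 \<le> h s"
    and ab: "a < b" "{a<..<b} \<subseteq> A" and pos: "\<And>s. a < s \<Longrightarrow> s < b \<Longrightarrow> 0 < h s"
  shows "0 < (LINT s:A|lborel. h s)"
proof -
  have "{a<..<b} \<notin> null_sets lborel"
    using ab(1) by (simp add: null_sets_def)
  then have "(LINT s:{a<..<b}|lborel. h s) \<noteq> 0"
    using null_if_pos_func_has_zero_int[of lborel h "{a<..<b}"] h pos by auto
  moreover have "0 \<le> (LINT s:{a<..<b}|lborel. h s)"
    using pos by (intro set_integral_nonneg) (simp add: less_imp_le)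
  moreover have "(LINT s:{a<..<b}|lborel. h s) \<le> (LINT s:A|lborel. h s)"
    using A h ab(2) nonneg by (intro set_integral_mono_set_lborel) auto
  ultimately show ?thesis by simp
qed

lemma cdf_eq_lessThan:
  fixes h :: "real \<Rightarrow> real"
  assumes "integrable lborel h"
  shows "cdf h s = (LINT t:{..<s}|lborel. h t)"
  unfolding cdf_def set_lebesgue_integral_def
proof (rule integral_cong_AE)
  show "(\<lambda>t. indicator {..s} t *\<^sub>R h t) \<in> borel_measurable lborel"
    "(\<lambda>t. indicator {..<s} t *\<^sub>R h t) \<in> borel_measurable lborel"
    using assms by (auto intro!: borel_measurable_integrable)
  show "AE t in lborel. indicator {..s} t *\<^sub>R h t = indicator {..<s} t *\<^sub>R h t"
    using AE_lborel_singleton[of s] by eventually_elim (auto simp: indicator_def)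
qed

lemma cdf_diff_eq_set_integral:
  fixes h :: "real \<Rightarrow> real"
  assumes "integrable lborel h" "a \<le> b"
  shows "cdf h b - cdf h a = (LINT t:{a..b}|lborel. h t)"
proof -
  have "{..b} = {..<a} \<union> {a..b}" using assms(2) by auto
  then have "cdf h b = (LINT t:{..<a}|lborel. h t) + (LINT t:{a..b}|lborel. h t)"
    unfolding cdf_def using assms(1) by (auto intro!: set_integral_Un)
  then show ?thesis using cdf_eq_lessThan[OF assms(1)] by simp
qed

lemma cdf_less:
  fixes h :: "real \<Rightarrow> real"
  assumes "integrable lborel h" "a < b" "\<And>t. a < t \<Longrightarrow> t < b \<Longrightarrow> 0 < h t"
  shows "cdf h a < cdf h b"
proof -
  have [measurable]: "h \<in> borel_measurable borel"
    using borel_measurable_integrable[OF assms(1)] by simp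
  have "0 < (LINT t:{a<..<b}|lborel. h t)"
    using assms by (intro set_integral_pos_lborel[of _ _ a b]) (auto simp: less_imp_le)
  also have "\<dots> = (LINT t:{a..b}|lborel. h t)"
    by (rule set_integral_cong_set) (use AE_lborel_singleton[of a] AE_lborel_singleton[of b]
        in \<open>auto simp: set_borel_measurable_def\<close>)
  finally show ?thesis using cdf_diff_eq_set_integral[of h a b] assms(1,2) by simp
qed

lemma set_integral_atLeast_eq:
  fixes h :: "real \<Rightarrow> real"
  assumes "integrable lborel h"
  shows "(LINT t:{s..}|lborel. h t) = integral\<^sup>L lborel h - cdf h s"
  using set_integral_add_Compl[of "{..<s}" h] assms
  by (simp add: cdf_eq_lessThan)

lemma continuous_cdf:
  fixes h :: "real \<Rightarrow> real"
  assumes h: "integrable lborel h"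
  shows "continuous_on UNIV (cdf h)"
proof (rule continuous_at_imp_continuous_on, safe)
  fix s0 :: real
  have "set_integrable lborel {s0 - 1..s0 + 1} h" using h by auto
  then have "h integrable_on {s0 - 1..s0 + 1}" by (rule set_borel_integral_eq_integral(1))
  then have "continuous_on {s0 - 1..s0 + 1} (\<lambda>s. cdf h (s0 - 1) + integral {s0 - 1..s} h)"
    by (intro continuous_intros indefinite_integral_continuous_1)
  moreover have "cdf h (s0 - 1) + integral {s0 - 1..s} h = cdf h s" if "s \<in> {s0 - 1..s0 + 1}" for s
  proof -
    have "set_integrable lborel {s0 - 1..s} h" using h by auto
    then show ?thesis
      using that cdf_diff_eq_set_integral[OF h, of "s0 - 1" s] set_borel_integral_eq_integral(2)
      by fastforce
  qed
  ultimately have "continuous_on {s0 - 1..s0 + 1} (cdf h)"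
    by (rule continuous_on_eq) simp
  then show "isCont (cdf h) s0"
    by (rule continuous_on_interior) auto
qed

lemma cdf_at_bot:
  fixes h :: "real \<Rightarrow> real"
  assumes h: "integrable lborel h"
  shows "(cdf h \<longlongrightarrow> 0) at_bot"
proof (rule tendsto_at_botI_sequentially)
  fix X :: "nat \<Rightarrow> real" assume X: "filterlim X at_bot sequentially"
  have "AE s in lborel. (\<lambda>n. indicator {..X n} s * h s) \<longlonglongrightarrow> 0"
  proof
    fix s
    have "eventually (\<lambda>n. X n < s) sequentially"
      using X unfolding filterlim_at_bot_dense by auto
    then show "(\<lambda>n. indicator {..X n} s * h s) \<longlonglongrightarrow> 0"
      by (intro tendsto_eventually) (auto elim!: eventually_mono)
  qed
  moreover have "AE s in lborel. norm (indicator {..X n} s * h s) \<le> norm (h s)" for n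
    by (auto simp: indicator_def)
  ultimately have "(\<lambda>n. integral\<^sup>L lborel (\<lambda>s. indicator {..X n} s * h s)) \<longlonglongrightarrow> integral\<^sup>L lborel (\<lambda>s. 0)"
    using h integral_dominated_convergence[of "\<lambda>s. 0" lborel "\<lambda>n s. indicator {..X n} s * h s"
        "\<lambda>s. norm (h s)"]
    by (auto intro: borel_measurable_integrable)
  then show "(\<lambda>n. cdf h (X n)) \<longlonglongrightarrow> 0"
    by (simp add: cdf_def set_lebesgue_integral_def)
qed

lemma not_AE_eq_on_interval:
  fixes h1 h2 :: "real \<Rightarrow> real"
  assumes "a < b" "\<And>s. a < s \<Longrightarrow> s < b \<Longrightarrow> h1 s \<noteq> h2 s"
  shows "\<not> (AE s in lborel. h1 s = h2 s)"
proof
  assume "AE s in lborel. h1 s = h2 s"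
  then have "AE s in lborel. s \<notin> {a<..<b}" by eventually_elim (use assms in auto)
  then have "emeasure lborel {a<..<b} = 0"
    by (subst (asm) AE_iff_measurable[of "{a<..<b}"]) auto
  then show False using assms(1) by simp
qed

lemma is_density_reweight:
  assumes h: "is_density h" and A: "A \<in> sets borel" and e: "0 \<le> e"
    and small: "e * (LINT s:A|lborel. h s) \<le> 1"
  shows "is_density (\<lambda>s. h s * (1 + e * (indicator A s - (LINT s:A|lborel. h s))))"
proof -
  define Z where "Z = (LINT s:A|lborel. h s)"
  have [measurable]: "h \<in> borel_measurable borel" and hi: "integrable lborel h"
    and h1: "integral\<^sup>L lborel h = 1" and hn: "\<And>s. 0 \<le> h s"
    using h unfolding is_density_def by auto
  have eq: "(\<lambda>s. h s * (1 + e * (indicator A s - Z))) = (\<lambda>s. h s + e * (indicator A s * h s) - (e * Z) * h s)"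
    by (simp add: fun_eq_iff algebra_simps)
  have "has_bochner_integral lborel (\<lambda>s. h s * (1 + e * (indicator A s - Z))) (1 + e * Z - (e * Z) * 1)"
    unfolding eq unfolding Z_def using hi h1 A
    by (intro has_bochner_integral_add has_bochner_integral_diff has_bochner_integral_mult_right
        has_bochner_integral_indicator_mult) (auto simp: has_bochner_integral_iff)
  moreover have "0 \<le> h s * (1 + e * (indicator A s - Z))" for s
  proof -
    have "1 - e * Z \<le> 1 + e * (indicator A s - Z)"
      using e by (simp add: algebra_simps)
    then show ?thesis using small hn[of s] unfolding Z_def[symmetric] by simp
  qed
  ultimately show ?thesis
    unfolding is_density_def Z_def[symmetric] using A by (auto simp: has_bochner_integral_iff)
qed

lemma optimal_imp_admissible:
  "optimal f0 f1 x abar a g \<Longrightarrow> admissible abar a g"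
  unfolding optimal_def by blast

lemma optimal_vote_prob_ge:
  assumes "optimal f0 f1 x abar a g" "admissible abar a' g'"
  shows "vote_prob f0 f1 x a' g' f0 \<le> vote_prob f0 f1 x a g f0"
    and "vote_prob f0 f1 x a' g' f1 \<le> vote_prob f0 f1 x a g f1"
  using assms unfolding optimal_def by blast+

lemma optimal_mass_le:
  assumes "optimal f0 f1 x abar a g" "admissible abar a' g'"
    and "vote_prob f0 f1 x a' g' f0 = vote_prob f0 f1 x a g f0"
    and "vote_prob f0 f1 x a' g' f1 = vote_prob f0 f1 x a g f1"
  shows "a \<le> a'"
proof (rule ccontr)
  assume "\<not> a \<le> a'"
  then have "a' < a" by simp
  with assms show False unfolding optimal_def by blast
qed

lemma optimal_same_mass:
  assumes opt: "optimal f0 f1 x abar a g" and opt': "optimal f0 f1 x abar a' g'"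
  shows "a = a'"
proof -
  note adm = opt[THEN optimal_imp_admissible] opt'[THEN optimal_imp_admissible]
  have "vote_prob f0 f1 x a' g' f = vote_prob f0 f1 x a g f" if "f = f0 \<or> f = f1" for f
    using that optimal_vote_prob_ge[OF opt adm(2)] optimal_vote_prob_ge[OF opt' adm(1)] by auto
  then have "a \<le> a'" "a' \<le> a"
    using optimal_mass_le[OF opt adm(2)] optimal_mass_le[OF opt' adm(1)] by auto
  then show ?thesis by simp
qed

lemma optimal_no_trolls:
  assumes "is_density g"
  shows "optimal f0 f1 x 0 0 g"
proof -
  have same_vote: "vote_prob f0 f1 x 0 g' f = vote_prob f0 f1 x 0 g f" for g' f
    unfolding vote_prob_def posterior_def by simp
  show ?thesis
    unfolding optimal_def admissible_def
  proof (intro conjI allI impI)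
    fix a' :: real and g' assume "0 \<le> a' \<and> a' \<le> 0 \<and> is_density g'"
    then show "vote_prob f0 f1 x a' g' f0 \<le> vote_prob f0 f1 x 0 g f0"
      "vote_prob f0 f1 x a' g' f1 \<le> vote_prob f0 f1 x 0 g f1"
      using same_vote[of g'] by auto
  qed (use assms in auto)
qed

lemma posterior_level_set_measurable:
  assumes [measurable]: "f0 \<in> borel_measurable borel" "f1 \<in> borel_measurable borel"
    "g \<in> borel_measurable borel"
  shows "{s. x \<le> posterior f0 f1 a g s} \<in> sets borel"
  unfolding posterior_def by measurable

lemma cap_below_ratio:
  fixes a K :: real
  assumes "0 < K" "a < K / (K + 1)"
  shows "a < 1" "a / (1 - a) < K"
proof -
  have *: "a * (K + 1) < K" using assms by (simp add: pos_less_divide_eq)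
  show "a < 1"
  proof (rule ccontr)
    assume "\<not> a < 1"
    then have "K + 1 \<le> a * (K + 1)" using assms(1) by (simp add: mult_le_cancel_right1)
    with * show False by linarith
  qed
  with * show "a / (1 - a) < K" by (simp add: divide_less_eq algebra_simps)
qed

locale troll_model =
  fixes f0 f1 :: "real \<Rightarrow> real" and x :: real
  assumes signal_model: "signal_model f0 f1"
    and x_pos: "0 < x" and x_less_1: "x < 1" and x_neq_half: "x \<noteq> 1/2"
begin

abbreviation sx :: real where "sx \<equiv> s_star f0 f1 x"
abbreviation k :: "real \<Rightarrow> real" where "k \<equiv> kappa' f0 f1 x"

lemma density_f0: "is_density f0" and density_f1: "is_density f1"
  and f0_pos: "0 < f0 s" and f1_pos: "0 < f1 s"
  using signal_model unfolding signal_model_def by auto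

lemma integrable_f0 [simp]: "integrable lborel f0" and integrable_f1 [simp]: "integrable lborel f1"
  and integral_f0: "integral\<^sup>L lborel f0 = 1" and integral_f1: "integral\<^sup>L lborel f1 = 1"
  and measurable_f0 [measurable]: "f0 \<in> borel_measurable borel"
  and measurable_f1 [measurable]: "f1 \<in> borel_measurable borel"
  using density_f0 density_f1 unfolding is_density_def by auto

lemma signal_pos: "f \<in> {f0, f1} \<Longrightarrow> 0 < f s"
  and signal_integrable: "f \<in> {f0, f1} \<Longrightarrow> integrable lborel f"
  and signal_integral: "f \<in> {f0, f1} \<Longrightarrow> integral\<^sup>L lborel f = 1"
  using f0_pos f1_pos integral_f0 integral_f1 by auto

lemma cdf_signal_pos: "f \<in> {f0, f1} \<Longrightarrow> 0 < cdf f t"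
  unfolding cdf_def
  by (rule set_integral_pos_lborel[of _ _ "t - 1" t])
    (auto simp: signal_pos signal_integrable less_imp_le)

lemma strict_mono_lr: "strict_mono (lr f0 f1)"
  using signal_model unfolding signal_model_def by blast

lemma lr_s_star: "lr f0 f1 sx = x / (1 - x)"
proof -
  have "0 < x / (1 - x)" using x_pos x_less_1 by simp
  then obtain s where s: "lr f0 f1 s = x / (1 - x)"
    using signal_model unfolding signal_model_def by blast
  have "sx = s"
    unfolding s_star_def using s strict_mono_eq[OF strict_mono_lr] by (intro the_equality) metis+
  then show ?thesis using s by simp
qed

lemma lr_less_cross: "s < t \<Longrightarrow> f1 s * f0 t < f1 t * f0 s"
  using strict_monoD[OF strict_mono_lr, of s t] f0_pos[of s] f0_pos[of t]
  by (simp add: lr_def divide_simps)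

lemma kappa'_eq_lr:
  "k s = (1 - x) * f0 s * (lr f0 f1 sx - lr f0 f1 s) / (1 - 2 * x)"
proof -
  have "(1 - x) * f0 s * (lr f0 f1 sx - lr f0 f1 s) = x * f0 s - (1 - x) * f1 s"
    using f0_pos[of s] x_less_1 unfolding lr_s_star by (simp add: lr_def field_simps)
  then show ?thesis unfolding kappa'_def by simp
qed

lemma kappa'_scaled: "(1 - 2 * x) * k s = x * f0 s - (1 - x) * f1 s"
  using x_neq_half unfolding kappa'_def by simp

lemma measurable_kappa' [measurable]: "k \<in> borel_measurable borel"
  unfolding kappa'_def by measurable

lemma integrable_kappa' [simp]: "integrable lborel k"
  unfolding kappa'_def by (intro integrable_divide integrable_diff integrable_mult_right) auto

lemma integral_kappa': "integral\<^sup>L lborel k = -1"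
proof -
  have "integral\<^sup>L lborel k = (x * 1 - (1 - x) * 1) / (1 - 2 * x)"
    unfolding kappa'_def by (simp add: integral_f0 integral_f1)
  also have "\<dots> = -1" using x_neq_half by (simp add: field_simps)
  finally show ?thesis .
qed

lemma kappa_eq_cdf: "kappa f0 f1 x s = cdf k s"
proof -
  have "set_integrable lborel {..s} f0" "set_integrable lborel {..s} f1" by auto
  then show ?thesis
    unfolding kappa_def cdf_def kappa'_def by simp
qed

definition persuaded :: "real \<Rightarrow> (real \<Rightarrow> real) \<Rightarrow> real set" where
  "persuaded a g = {s. x \<le> posterior f0 f1 a g s}"

lemma persuaded_measurable [measurable]:
  "g \<in> borel_measurable borel \<Longrightarrow> persuaded a g \<in> sets borel"
  unfolding persuaded_def by (rule posterior_level_set_measurable) auto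

lemma mem_persuaded_iff:
  assumes "0 \<le> a" "a < 1" "0 \<le> g s"
  shows "s \<in> persuaded a g \<longleftrightarrow> (1 - 2 * x) * ((1 - a) * k s - a * g s) \<le> 0"
proof -
  define P where "P = (1 - a) * f1 s + a * g s"
  define Q where "Q = (1 - a) * f0 s + a * g s"
  have "0 < P" "0 < Q"
    unfolding P_def Q_def using assms f0_pos[of s] f1_pos[of s] by (auto intro: add_pos_nonneg)
  moreover have "posterior f0 f1 a g s = P / (P + Q)"
    unfolding posterior_def P_def Q_def by (simp add: add.assoc)
  ultimately have "s \<in> persuaded a g \<longleftrightarrow> x * (P + Q) - P \<le> 0"
    unfolding persuaded_def by (simp add: pos_le_divide_eq)
  also have "x * (P + Q) - P = (1 - 2 * x) * ((1 - a) * k s - a * g s)"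
    unfolding P_def Q_def kappa'_def using x_neq_half by (simp add: field_simps)
  finally show ?thesis .
qed

lemma vote_prob_eq:
  assumes "g \<in> borel_measurable borel" "integrable lborel g" "integrable lborel f"
  shows "vote_prob f0 f1 x a g f
    = (1 - a) * (LINT s:persuaded a g|lborel. f s) + a * (LINT s:persuaded a g|lborel. g s)"
proof -
  have "persuaded a g \<in> sets borel" using assms(1) by measurable
  then have "set_integrable lborel (persuaded a g) f" "set_integrable lborel (persuaded a g) g"
    using assms(2,3) by auto
  then show ?thesis
    unfolding vote_prob_def persuaded_def[symmetric] by simp
qed

lemma vote_prob_eq_Compl:
  assumes f: "f \<in> {f0, f1}" and g: "is_density g"
  shows "vote_prob f0 f1 x a g f = 1 - (1 - a) * (LINT s:- persuaded a g|lborel. f s)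
    - a * (LINT s:- persuaded a g|lborel. g s)"
proof -
  have gm [measurable]: "g \<in> borel_measurable borel" and gi: "integrable lborel g"
    and "integral\<^sup>L lborel g = 1"
    using g unfolding is_density_def by auto
  then have P: "(LINT s:persuaded a g|lborel. f s) = 1 - (LINT s:- persuaded a g|lborel. f s)"
    "(LINT s:persuaded a g|lborel. g s) = 1 - (LINT s:- persuaded a g|lborel. g s)"
    using set_integral_add_Compl[of "persuaded a g" f] set_integral_add_Compl[of "persuaded a g" g]
      signal_integrable[OF f] signal_integral[OF f] by (simp_all add: eq_diff_eq)
  show ?thesis
    unfolding vote_prob_eq[OF gm gi signal_integrable[OF f]] P by (simp add: algebra_simps)
qed

end

locale troll_model_low = troll_model +
  assumes x_less_half: "x < 1/2"
begin

lemma kappa'_sign: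
  "0 < k s \<longleftrightarrow> s < sx" "0 \<le> k s \<longleftrightarrow> s \<le> sx"
proof -
  have c: "0 < (1 - x) * f0 s / (1 - 2 * x)"
    using f0_pos[of s] x_less_1 x_less_half by simp
  have k: "k s = (1 - x) * f0 s / (1 - 2 * x) * (lr f0 f1 sx - lr f0 f1 s)"
    by (simp add: kappa'_eq_lr)
  show "0 < k s \<longleftrightarrow> s < sx"
    using mult_less_cancel_left_pos[OF c, of 0] strict_mono_less[OF strict_mono_lr] k by simp
  show "0 \<le> k s \<longleftrightarrow> s \<le> sx"
    using mult_le_cancel_left_pos[OF c, of 0] strict_mono_less_eq[OF strict_mono_lr] k by simp
qed

lemma mem_persuaded_iff_low:
  assumes "0 \<le> a" "a < 1" "0 \<le> g s"
  shows "s \<in> persuaded a g \<longleftrightarrow> (1 - a) * k s \<le> a * g s"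
  using mem_persuaded_iff[of a g s, OF assms] x_less_half by (simp add: mult_le_0_iff)

lemma unpersuaded_less_s_star:
  assumes "0 \<le> a" "a < 1" "0 \<le> g s" "s \<notin> persuaded a g"
  shows "s < sx"
proof -
  have "\<not> (1 - a) * k s \<le> a * g s"
    using mem_persuaded_iff_low[of a g s] assms by simp
  moreover have "0 \<le> a * g s" using assms by simp
  ultimately have "0 < (1 - a) * k s" by linarith
  then show ?thesis using assms(2) kappa'_sign(1) by (simp add: zero_less_mult_iff)
qed

lemma kappa'_ratio_mono:
  assumes "f \<in> {f0, f1}" "s < t"
  shows "f s * k t < f t * k s"
proof -
  have key: "(1 - 2 * x) * (f s * k t - f t * k s)
    = f s * (x * f0 t - (1 - x) * f1 t) - f t * (x * f0 s - (1 - x) * f1 s)" for f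
  proof -
    have "(1 - 2 * x) * (f s * k t - f t * k s) = f s * ((1 - 2 * x) * k t) - f t * ((1 - 2 * x) * k s)"
      by (simp add: algebra_simps)
    then show ?thesis by (simp only: kappa'_scaled)
  qed
  have "(1 - 2 * x) * (f0 s * k t - f0 t * k s) = (1 - x) * (f1 s * f0 t - f1 t * f0 s)"
    "(1 - 2 * x) * (f1 s * k t - f1 t * k s) = x * (f1 s * f0 t - f1 t * f0 s)"
    unfolding key by (simp_all add: algebra_simps)
  moreover have "(1 - x) * (f1 s * f0 t - f1 t * f0 s) < 0" "x * (f1 s * f0 t - f1 t * f0 s) < 0"
    using lr_less_cross[OF assms(2)] x_pos x_less_1 by (simp_all add: mult_pos_neg)
  ultimately have "(1 - 2 * x) * (f s * k t - f t * k s) < 0"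
    using assms(1) by auto
  then show ?thesis using x_less_half by (simp add: mult_less_0_iff)
qed

lemma cdf_kappa'_less:
  assumes "s1 < s2" "s2 \<le> sx"
  shows "cdf k s1 < cdf k s2"
  using assms by (intro cdf_less) (auto simp: kappa'_sign)

lemma inj_on_cdf_kappa': "inj_on (cdf k) {..sx}"
  by (rule strict_mono_on_imp_inj_on, rule strict_mono_onI) (simp add: cdf_kappa'_less)

lemma cdf_kappa'_s_star_pos: "0 < cdf k sx"
  unfolding cdf_eq_lessThan[OF integrable_kappa']
  by (rule set_integral_pos_lborel[of _ _ "sx - 1" sx]) (auto simp: kappa'_sign)

lemma alpha_star_low: "alpha_star f0 f1 x = cdf k sx / (cdf k sx + 1)"
  unfolding alpha_star_def Let_def kappa_eq_cdf using x_less_half by simp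

lemma exists_cutoff:
  assumes "0 < abar" "abar < alpha_star f0 f1 x"
  shows "\<exists>sh < sx. cdf k sh = cdf k sx - abar / (1 - abar)"
proof -
  define y where "y = cdf k sx - abar / (1 - abar)"
  have "abar < 1" "abar / (1 - abar) < cdf k sx"
    using cap_below_ratio[OF cdf_kappa'_s_star_pos] assms(2) by (simp_all add: alpha_star_low)
  then have y: "0 < y" "y < cdf k sx" unfolding y_def using assms(1) by auto
  obtain N where N: "\<And>s. s \<le> N \<Longrightarrow> cdf k s < y"
    using order_tendstoD(2)[OF cdf_at_bot[OF integrable_kappa'] y(1)]
    unfolding eventually_at_bot_linorder by blast
  define s1 where "s1 = min N sx"
  have s1: "s1 \<le> sx" "cdf k s1 \<le> y" using N[of s1] unfolding s1_def by auto
  have "continuous_on {s1..sx} (cdf k)"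
    using continuous_cdf[OF integrable_kappa'] by (rule continuous_on_subset) simp
  then obtain sh where sh: "sh \<le> sx" "cdf k sh = y"
    using IVT'[of "cdf k" s1 y sx] s1 y(2) by auto
  with y(2) have "sh < sx" by (cases "sh = sx") auto
  with sh show ?thesis unfolding y_def by blast
qed

lemma f_C_eq: "f_C f0 f1 x abar sh = (\<lambda>s. (1 - abar) / abar * (indicator {sh..sx} s * k s))"
  by (simp add: fun_eq_iff f_C_def indicator_def)

lemma is_density_f_C_iff:
  assumes "0 < abar" "abar < 1" "sh \<le> sx"
  shows "is_density (f_C f0 f1 x abar sh) \<longleftrightarrow> cdf k sh = cdf k sx - abar / (1 - abar)"
proof -
  have "integral\<^sup>L lborel (f_C f0 f1 x abar sh) = (1 - abar) / abar * (cdf k sx - cdf k sh)"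
    unfolding f_C_eq cdf_diff_eq_set_integral[OF integrable_kappa' assms(3)]
    by (simp add: set_lebesgue_integral_def)
  moreover have "integrable lborel (f_C f0 f1 x abar sh)"
    using set_integrable_lborel[of "{sh..sx}" k]
    unfolding f_C_eq set_integrable_def by simp
  moreover have "0 \<le> f_C f0 f1 x abar sh s" for s
    using assms by (simp add: f_C_def kappa'_sign)
  moreover have "f_C f0 f1 x abar sh \<in> borel_measurable borel"
    unfolding f_C_eq by measurable
  moreover have "(1 - abar) / abar * (cdf k sx - cdf k sh) = 1
      \<longleftrightarrow> cdf k sh = cdf k sx - abar / (1 - abar)"
    using assms(1,2) by (auto simp: field_simps)
  ultimately show ?thesis
    unfolding is_density_def by auto
qed

end

locale troll_model_capped = troll_model_low +
  fixes abar sh :: real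
  assumes cap_pos: "0 < abar" and cap_less_1: "abar < 1"
    and cutoff_less: "sh < sx" and cdf_cutoff: "cdf k sh = cdf k sx - abar / (1 - abar)"
begin

abbreviation fC :: "real \<Rightarrow> real" where "fC \<equiv> f_C f0 f1 x abar sh"

lemma density_f_C: "is_density fC"
  using is_density_f_C_iff[OF cap_pos cap_less_1] cutoff_less cdf_cutoff by simp

lemma admissible_f_C: "admissible abar abar fC"
  unfolding admissible_def using cap_pos density_f_C by simp

lemma kappa'_cutoff_pos: "0 < k sh"
  using cutoff_less kappa'_sign(1) by simp

definition multiplier :: "(real \<Rightarrow> real) \<Rightarrow> real" where
  "multiplier f = f sh / k sh"

lemma multiplier_pos: "f \<in> {f0, f1} \<Longrightarrow> 0 < multiplier f"
  unfolding multiplier_def using kappa'_cutoff_pos signal_pos by simp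

lemma sgn_signal_minus_multiplier:
  assumes "f \<in> {f0, f1}"
  shows "sgn (f s - multiplier f * k s) = sgn (s - sh)"
proof (cases s sh rule: linorder_cases)
  case less
  then have "f s * k sh < f sh * k s" using kappa'_ratio_mono[OF assms] by blast
  then have "f s < multiplier f * k s"
    unfolding multiplier_def using kappa'_cutoff_pos by (simp add: field_simps)
  then show ?thesis using less by simp
next
  case equal
  then show ?thesis unfolding multiplier_def using kappa'_cutoff_pos by simp
next
  case greater
  then have "f sh * k s < f s * k sh" using kappa'_ratio_mono[OF assms] by blast
  then have "multiplier f * k s < f s"
    unfolding multiplier_def using kappa'_cutoff_pos by (simp add: field_simps)
  then show ?thesis using greater by simp
qed

text \<open>The Lagrangian certificate: by \<open>vote_prob_shortfall\<close>, the shortfall of the vote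
  probability of \<open>(a, g)\<close> from \<open>1 - (1 - abar) * cdf f sh\<close> is the integral of \<open>slack\<close> plus a
  nonnegative multiple of \<open>abar - a\<close>. The multiplier prices the troll budget, and
  \<open>misallocation\<close> is nonnegative because \<open>f / k\<close> increases (the Neyman--Pearson argument).\<close>

definition misallocation :: "(real \<Rightarrow> real) \<Rightarrow> real \<Rightarrow> (real \<Rightarrow> real) \<Rightarrow> real \<Rightarrow> real" where
  "misallocation f a g s = (1 - a) * (f s - multiplier f * k s)
     * (indicator (- persuaded a g) s - indicator {..sh} s)"

definition excess_trolls :: "(real \<Rightarrow> real) \<Rightarrow> real \<Rightarrow> (real \<Rightarrow> real) \<Rightarrow> real \<Rightarrow> real" where
  "excess_trolls f a g s = multiplier f
     * (a * g s - (1 - a) * k s * indicator (persuaded a g \<inter> {..sx}) s)"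

definition wasted_trolls :: "real \<Rightarrow> (real \<Rightarrow> real) \<Rightarrow> real \<Rightarrow> real" where
  "wasted_trolls a g s = a * g s * indicator (- persuaded a g) s"

definition slack :: "(real \<Rightarrow> real) \<Rightarrow> real \<Rightarrow> (real \<Rightarrow> real) \<Rightarrow> real \<Rightarrow> real" where
  "slack f a g s = misallocation f a g s + excess_trolls f a g s + wasted_trolls a g s"

lemma misallocation_nonneg:
  assumes "f \<in> {f0, f1}" "a \<le> 1"
  shows "0 \<le> misallocation f a g s"
proof -
  have "0 \<le> (f s - multiplier f * k s) * (indicator (- persuaded a g) s - indicator {..sh} s)"
    using sgn_signal_minus_multiplier[OF assms(1), of s]
    by (cases "s \<le> sh") (auto simp: indicator_def sgn_if split: if_splits)
  then show ?thesis
    unfolding misallocation_def mult.assoc using assms(2) by simp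
qed

lemma excess_trolls_nonneg:
  assumes "f \<in> {f0, f1}" "0 \<le> a" "a < 1" "0 \<le> g s"
  shows "0 \<le> excess_trolls f a g s"
proof -
  have "0 \<le> a * g s - (1 - a) * k s * indicator (persuaded a g \<inter> {..sx}) s"
    using mem_persuaded_iff_low[of a g s] assms by (auto simp: indicator_def)
  then show ?thesis unfolding excess_trolls_def using multiplier_pos[OF assms(1)] by simp
qed

lemma wasted_trolls_nonneg: "0 \<le> a \<Longrightarrow> 0 \<le> g s \<Longrightarrow> 0 \<le> wasted_trolls a g s"
  unfolding wasted_trolls_def by simp

lemma slack_nonneg:
  assumes "f \<in> {f0, f1}" "admissible abar a g"
  shows "0 \<le> slack f a g s"
proof -
  have "0 \<le> a" "a < 1" "0 \<le> g s"
    using assms(2) cap_less_1 unfolding admissible_def is_density_def by auto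
  then show ?thesis unfolding slack_def
    using misallocation_nonneg excess_trolls_nonneg wasted_trolls_nonneg assms(1) by fastforce
qed

lemma set_integral_kappa'_unpersuaded:
  assumes "0 \<le> a" "a < 1" "is_density g"
  shows "(LINT s:- persuaded a g|lborel. k s) = cdf k sx - (LINT s:persuaded a g \<inter> {..sx}|lborel. k s)"
proof -
  have g [measurable]: "g \<in> borel_measurable borel" and "\<And>s. 0 \<le> g s"
    using assms(3) unfolding is_density_def by auto
  then have "- persuaded a g \<subseteq> {..<sx}"
    using unpersuaded_less_s_star assms(1,2) by auto
  then have "- persuaded a g \<union> (persuaded a g \<inter> {..sx}) = {..sx}"
    by auto
  moreover have "(LINT s:- persuaded a g \<union> (persuaded a g \<inter> {..sx})|lborel. k s)
      = (LINT s:- persuaded a g|lborel. k s) + (LINT s:persuaded a g \<inter> {..sx}|lborel. k s)"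
    by (intro set_integral_Un set_integrable_lborel) auto
  ultimately show ?thesis unfolding cdf_def by simp
qed

lemma has_integral_misallocation:
  assumes "f \<in> {f0, f1}" "g \<in> borel_measurable borel"
  shows "has_bochner_integral lborel (misallocation f a g)
    ((1 - a) * ((LINT s:- persuaded a g|lborel. f s) - cdf f sh)
      - (1 - a) * multiplier f * ((LINT s:- persuaded a g|lborel. k s) - cdf k sh))"
proof -
  let ?U = "- persuaded a g"
  have [measurable]: "?U \<in> sets borel" using assms(2) by measurable
  have eq: "misallocation f a g = (\<lambda>s. (1 - a) * (indicator ?U s * f s - indicator {..sh} s * f s)
      - (1 - a) * multiplier f * (indicator ?U s * k s - indicator {..sh} s * k s))"
    by (simp add: fun_eq_iff misallocation_def algebra_simps)
  show ?thesis
    unfolding eq cdf_def using signal_integrable[OF assms(1)]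
    by (intro has_bochner_integral_diff has_bochner_integral_mult_right
        has_bochner_integral_indicator_mult) auto
qed

lemma has_integral_excess_trolls:
  assumes "is_density g"
  shows "has_bochner_integral lborel (excess_trolls f a g)
    (multiplier f * (a - (1 - a) * (LINT s:persuaded a g \<inter> {..sx}|lborel. k s)))"
proof -
  have [measurable]: "g \<in> borel_measurable borel" and "integrable lborel g" "integral\<^sup>L lborel g = 1"
    using assms unfolding is_density_def by auto
  have eq: "excess_trolls f a g = (\<lambda>s. multiplier f * (a * g s
      - (1 - a) * (indicator (persuaded a g \<inter> {..sx}) s * k s)))"
    by (simp add: fun_eq_iff excess_trolls_def algebra_simps)
  have "has_bochner_integral lborel g 1"
    using \<open>integrable lborel g\<close> \<open>integral\<^sup>L lborel g = 1\<close> by (simp add: has_bochner_integral_iff)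
  then have "has_bochner_integral lborel (\<lambda>s. a * g s) a"
    using has_bochner_integral_mult_right[of a lborel g 1] by simp
  then show ?thesis
    unfolding eq
    by (intro has_bochner_integral_diff has_bochner_integral_mult_right
        has_bochner_integral_indicator_mult[of _ k, simplified]) auto
qed

lemma has_integral_wasted_trolls:
  assumes "is_density g"
  shows "has_bochner_integral lborel (wasted_trolls a g) (a * (LINT s:- persuaded a g|lborel. g s))"
proof -
  have [measurable]: "g \<in> borel_measurable borel" and "integrable lborel g"
    using assms unfolding is_density_def by auto
  have eq: "wasted_trolls a g = (\<lambda>s. a * (indicator (- persuaded a g) s * g s))"
    by (simp add: fun_eq_iff wasted_trolls_def)
  show ?thesis
    unfolding eq using \<open>integrable lborel g\<close>
    by (intro has_bochner_integral_mult_right has_bochner_integral_indicator_mult) auto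
qed

lemma has_integral_slack:
  assumes "f \<in> {f0, f1}" "is_density g"
  shows "has_bochner_integral lborel (slack f a g)
    ((1 - a) * ((LINT s:- persuaded a g|lborel. f s) - cdf f sh)
      - (1 - a) * multiplier f * ((LINT s:- persuaded a g|lborel. k s) - cdf k sh)
      + multiplier f * (a - (1 - a) * (LINT s:persuaded a g \<inter> {..sx}|lborel. k s))
      + a * (LINT s:- persuaded a g|lborel. g s))"
proof -
  have "g \<in> borel_measurable borel" using assms(2) unfolding is_density_def by simp
  then show ?thesis
    unfolding slack_def[abs_def] using assms
    by (intro has_bochner_integral_add has_integral_misallocation has_integral_excess_trolls
        has_integral_wasted_trolls)
qed

lemma vote_prob_shortfall:
  assumes f: "f \<in> {f0, f1}" and adm: "admissible abar a g"
  shows "1 - (1 - abar) * cdf f sh - vote_prob f0 f1 x a g f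
    = integral\<^sup>L lborel (slack f a g) + (abar - a) * (cdf f sh + multiplier f / (1 - abar))"
proof -
  have a: "0 \<le> a" "a < 1" and g: "is_density g"
    using adm cap_less_1 unfolding admissible_def by auto
  define c where "c = abar / (1 - abar)"
  have inv: "multiplier f / (1 - abar) = multiplier f * (1 + c)" and cap: "abar * (1 + c) = c"
    unfolding c_def using cap_less_1 by (simp_all add: field_simps)
  have "(abar - a) * (cdf f sh + multiplier f / (1 - abar))
      = (abar - a) * cdf f sh + multiplier f * (abar * (1 + c) - a * (1 + c))"
    unfolding inv by (simp add: algebra_simps)
  also have "\<dots> = (abar - a) * cdf f sh + multiplier f * ((1 - a) * c - a)"
    unfolding cap by (simp add: algebra_simps)
  finally show ?thesis
    unfolding vote_prob_eq_Compl[OF f g] has_bochner_integral_integral_eq[OF has_integral_slack[OF f g]]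
      set_integral_kappa'_unpersuaded[OF a g] cdf_cutoff c_def[symmetric]
    by (simp add: algebra_simps)
qed

lemma integral_slack_nonneg:
  assumes "f \<in> {f0, f1}" "admissible abar a g"
  shows "0 \<le> integral\<^sup>L lborel (slack f a g)"
  using slack_nonneg[OF assms] by (intro integral_nonneg_AE) auto

lemma vote_prob_le_bound:
  assumes f: "f \<in> {f0, f1}" and adm: "admissible abar a g"
  shows "vote_prob f0 f1 x a g f \<le> 1 - (1 - abar) * cdf f sh"
    and "1 - (1 - abar) * cdf f sh \<le> vote_prob f0 f1 x a g f
      \<Longrightarrow> a = abar \<and> (AE s in lborel. slack f a g s = 0)"
proof -
  have "0 < cdf f sh + multiplier f / (1 - abar)"
    using cdf_signal_pos[OF f] multiplier_pos[OF f] cap_less_1 by (simp add: add_pos_pos)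
  moreover have "a \<le> abar" using adm unfolding admissible_def by simp
  ultimately have gap: "0 \<le> (abar - a) * (cdf f sh + multiplier f / (1 - abar))" by simp
  note shortfall = vote_prob_shortfall[OF f adm] and nonneg = integral_slack_nonneg[OF f adm]
  show "vote_prob f0 f1 x a g f \<le> 1 - (1 - abar) * cdf f sh"
    using shortfall nonneg gap by linarith
  assume "1 - (1 - abar) * cdf f sh \<le> vote_prob f0 f1 x a g f"
  then have "integral\<^sup>L lborel (slack f a g) = 0"
    and "(abar - a) * (cdf f sh + multiplier f / (1 - abar)) = 0"
    using shortfall nonneg gap by linarith+
  moreover have "integrable lborel (slack f a g)"
    using has_integral_slack[OF f] adm unfolding admissible_def by (blast intro: integrable.intros)
  ultimately show "a = abar \<and> (AE s in lborel. slack f a g s = 0)"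
    using \<open>0 < cdf f sh + multiplier f / (1 - abar)\<close> slack_nonneg[OF f adm]
    by (simp add: integral_nonneg_eq_0_iff_AE)
qed

lemma scaled_f_C: "abar * fC s = (if sh \<le> s \<and> s \<le> sx then (1 - abar) * k s else 0)"
  using cap_pos by (simp add: f_C_def)

lemma persuaded_f_C: "s \<in> persuaded abar fC \<longleftrightarrow> sh \<le> s"
proof -
  have "0 \<le> fC s" using density_f_C unfolding is_density_def by simp
  then have "s \<in> persuaded abar fC \<longleftrightarrow> (1 - abar) * k s \<le> abar * fC s"
    using mem_persuaded_iff_low cap_pos cap_less_1 by simp
  also have "\<dots> \<longleftrightarrow> sh \<le> s"
    using kappa'_sign[of s] cutoff_less cap_less_1 unfolding scaled_f_C
    by (auto simp: mult_le_0_iff not_le)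
  finally show ?thesis .
qed

lemma slack_f_C:
  assumes "f \<in> {f0, f1}"
  shows "slack f abar fC s = 0"
proof -
  have "misallocation f abar fC s = 0"
  proof (cases "s = sh")
    case True
    then show ?thesis
      using sgn_signal_minus_multiplier[OF assms, of s] unfolding misallocation_def
      by (simp add: sgn_0_0)
  next
    case False
    then show ?thesis unfolding misallocation_def by (auto simp: indicator_def persuaded_f_C)
  qed
  moreover have "excess_trolls f abar fC s = 0"
    unfolding excess_trolls_def scaled_f_C by (simp add: indicator_def persuaded_f_C)
  moreover have "wasted_trolls abar fC s = 0"
    unfolding wasted_trolls_def by (simp add: indicator_def persuaded_f_C f_C_def)
  ultimately show ?thesis unfolding slack_def by simp
qed

lemma vote_prob_f_C:
  assumes "f \<in> {f0, f1}"
  shows "vote_prob f0 f1 x abar fC f = 1 - (1 - abar) * cdf f sh"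
proof -
  have "slack f abar fC = (\<lambda>s. 0)" using slack_f_C[OF assms] by (simp add: fun_eq_iff)
  then show ?thesis using vote_prob_shortfall[OF assms admissible_f_C] by simp
qed

lemma optimal_f_C: "optimal f0 f1 x abar abar fC"
  unfolding optimal_def
proof (intro conjI allI impI notI admissible_f_C)
  fix a g assume "admissible abar a g"
  then show "vote_prob f0 f1 x a g f0 \<le> vote_prob f0 f1 x abar fC f0"
    "vote_prob f0 f1 x a g f1 \<le> vote_prob f0 f1 x abar fC f1"
    using vote_prob_le_bound(1) vote_prob_f_C by simp_all
next
  assume "\<exists>a g. admissible abar a g \<and> vote_prob f0 f1 x a g f0 = vote_prob f0 f1 x abar fC f0
    \<and> vote_prob f0 f1 x a g f1 = vote_prob f0 f1 x abar fC f1 \<and> a < abar"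
  then show False
    using vote_prob_le_bound(2)[of f0] vote_prob_f_C[of f0] by force
qed

lemma eq_f_C_if_slack_zero:
  assumes adm: "admissible abar abar g" and slack: "slack f0 abar g s = 0"
    and "s \<noteq> sh" "s \<noteq> sx"
  shows "g s = fC s"
proof -
  have f0: "f0 \<in> {f0, f1}" by simp
  have "0 \<le> misallocation f0 abar g s" "0 \<le> excess_trolls f0 abar g s" "0 \<le> wasted_trolls abar g s"
    using adm cap_pos cap_less_1 misallocation_nonneg excess_trolls_nonneg wasted_trolls_nonneg
    unfolding admissible_def is_density_def by auto
  with slack have "misallocation f0 abar g s = 0" "excess_trolls f0 abar g s = 0"
    unfolding slack_def by linarith+
  then have U: "indicator (- persuaded abar g) s = (indicator {..sh} s :: real)"
    and budget: "abar * g s = (1 - abar) * k s * indicator (persuaded abar g \<inter> {..sx}) s"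
    using sgn_signal_minus_multiplier[OF f0, of s] \<open>s \<noteq> sh\<close> cap_less_1 multiplier_pos[OF f0]
    unfolding misallocation_def excess_trolls_def by (auto simp: sgn_if split: if_splits)
  show ?thesis
  proof (cases "s < sh")
    case True
    then show ?thesis using U budget cap_pos by (auto simp: indicator_def f_C_def)
  next
    case False
    then show ?thesis using U budget cap_pos \<open>s \<noteq> sx\<close> \<open>s \<noteq> sh\<close>
      by (auto simp: indicator_def f_C_def field_simps split: if_splits)
  qed
qed

lemma optimal_imp_AE_eq_f_C:
  assumes opt: "optimal f0 f1 x abar a g"
  shows "AE s in lborel. g s = fC s"
proof -
  have "a = abar" using optimal_same_mass[OF opt optimal_f_C] .
  with opt have adm: "admissible abar abar g" and "optimal f0 f1 x abar abar g"
    using optimal_imp_admissible by auto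
  then have "vote_prob f0 f1 x abar fC f0 \<le> vote_prob f0 f1 x abar g f0"
    using admissible_f_C optimal_vote_prob_ge(1) by blast
  then have "AE s in lborel. slack f0 abar g s = 0"
    using vote_prob_le_bound(2)[of f0 abar g] adm vote_prob_f_C[of f0] by simp
  then show ?thesis
    using AE_lborel_singleton[of sh] AE_lborel_singleton[of sx]
    by eventually_elim (use eq_f_C_if_slack_zero[OF adm] in blast)
qed

lemma optimal_f_C_imp_cutoff:
  assumes "sh' < sx" "optimal f0 f1 x abar abar (f_C f0 f1 x abar sh')"
  shows "sh' = sh"
proof -
  have "is_density (f_C f0 f1 x abar sh')"
    using optimal_imp_admissible[OF assms(2)] unfolding admissible_def by simp
  then have "cdf k sh' = cdf k sh"
    using is_density_f_C_iff[OF cap_pos cap_less_1] assms(1) cdf_cutoff by simp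
  then show ?thesis using inj_on_cdf_kappa' assms(1) cutoff_less by (auto dest: inj_onD)
qed

end

context troll_model_low
begin

lemma optimal_f_C_unique_cutoff:
  assumes "0 < abar" "abar < alpha_star f0 f1 x"
  shows "\<exists>sh. sh < sx \<and> optimal f0 f1 x abar abar (f_C f0 f1 x abar sh)
    \<and> (\<forall>sh'. sh' < sx \<and> optimal f0 f1 x abar abar (f_C f0 f1 x abar sh') \<longrightarrow> sh' = sh)
    \<and> (\<forall>a g. optimal f0 f1 x abar a g \<longrightarrow> (AE s in lborel. g s = f_C f0 f1 x abar sh s))"
proof -
  have "abar < 1"
    using cap_below_ratio(1)[OF cdf_kappa'_s_star_pos] assms(2) by (simp add: alpha_star_low)
  obtain sh where "sh < sx" "cdf k sh = cdf k sx - abar / (1 - abar)"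
    using exists_cutoff[OF assms] by blast
  then interpret troll_model_capped f0 f1 x abar sh
    using assms(1) \<open>abar < 1\<close> by unfold_locales
  show ?thesis
    using cutoff_less optimal_f_C optimal_f_C_imp_cutoff optimal_imp_AE_eq_f_C by blast
qed

lemma exists_optimal_low:
  assumes "0 \<le> abar" "abar < alpha_star f0 f1 x"
  shows "\<exists>g. optimal f0 f1 x abar abar g"
proof (cases "abar = 0")
  case True
  then show ?thesis using optimal_no_trolls[OF density_f0] by blast
next
  case False
  then show ?thesis using optimal_f_C_unique_cutoff[of abar] assms by auto
qed

end

locale troll_model_high = troll_model +
  assumes half_less_x: "1/2 < x"
begin

lemma kappa'_sign_high:
  "0 < k s \<longleftrightarrow> sx < s" "0 \<le> k s \<longleftrightarrow> sx \<le> s"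
proof -
  have c: "0 < (1 - x) * f0 s / (2 * x - 1)"
    using f0_pos[of s] x_less_1 half_less_x by simp
  have k: "k s = (1 - x) * f0 s / (2 * x - 1) * (lr f0 f1 s - lr f0 f1 sx)"
    unfolding kappa'_eq_lr using half_less_x by (simp add: field_simps)
  show "0 < k s \<longleftrightarrow> sx < s"
    using mult_less_cancel_left_pos[OF c, of 0] strict_mono_less[OF strict_mono_lr] k by simp
  show "0 \<le> k s \<longleftrightarrow> sx \<le> s"
    using mult_le_cancel_left_pos[OF c, of 0] strict_mono_less_eq[OF strict_mono_lr] k by simp
qed

lemma mem_persuaded_iff_high:
  assumes "0 \<le> a" "a < 1" "0 \<le> g s"
  shows "s \<in> persuaded a g \<longleftrightarrow> a * g s \<le> (1 - a) * k s"
  using mem_persuaded_iff[of a g s, OF assms] half_less_x by (simp add: mult_le_0_iff)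

lemma persuaded_subset_high:
  assumes "0 \<le> a" "a < 1" "\<And>s. 0 \<le> g s"
  shows "persuaded a g \<subseteq> {sx..}"
proof
  fix s assume "s \<in> persuaded a g"
  then have "a * g s \<le> (1 - a) * k s" using mem_persuaded_iff_high assms by simp
  moreover have "0 \<le> a * g s" using assms by simp
  ultimately have "0 \<le> (1 - a) * k s" by linarith
  then show "s \<in> {sx..}" using assms(2) kappa'_sign_high(2) by (simp add: zero_le_mult_iff)
qed

definition tail_kappa' :: real where
  "tail_kappa' = (LINT t:{sx..}|lborel. k t)"

lemma tail_kappa'_pos: "0 < tail_kappa'"
  unfolding tail_kappa'_def
  by (rule set_integral_pos_lborel[of _ _ sx "sx + 1"]) (auto simp: kappa'_sign_high)

lemma alpha_star_high: "alpha_star f0 f1 x = tail_kappa' / (tail_kappa' + 1)"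
proof -
  have "cdf k sx = - 1 - tail_kappa'"
    using set_integral_atLeast_eq[OF integrable_kappa', of sx] integral_kappa'
    unfolding tail_kappa'_def by simp
  then show ?thesis
    unfolding alpha_star_def Let_def kappa_eq_cdf using half_less_x tail_kappa'_pos
    by (simp add: field_simps)
qed

lemma f_star_eq: "f_star f0 f1 x = (\<lambda>s. indicator {sx..} s * k s / tail_kappa')"
proof -
  have "(1 - alpha_star f0 f1 x) / alpha_star f0 f1 x = 1 / tail_kappa'"
    unfolding alpha_star_high using tail_kappa'_pos by (simp add: divide_simps)
  then show ?thesis by (simp add: fun_eq_iff f_star_def indicator_def)
qed

lemma density_f_star: "is_density (f_star f0 f1 x)"
  unfolding is_density_def f_star_eq
proof (intro conjI allI)
  show "(\<lambda>s. indicator {sx..} s * k s / tail_kappa') \<in> borel_measurable borel" by measurable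
  show "0 \<le> indicator {sx..} s * k s / tail_kappa'" for s
    using tail_kappa'_pos kappa'_sign_high(2)[of s] by (simp add: indicator_def)
  show "integrable lborel (\<lambda>s. indicator {sx..} s * k s / tail_kappa')"
    using set_integrable_lborel[of "{sx..}" k] unfolding set_integrable_def by simp
  show "integral\<^sup>L lborel (\<lambda>s. indicator {sx..} s * k s / tail_kappa') = 1"
    using tail_kappa'_pos unfolding tail_kappa'_def set_lebesgue_integral_def by simp
qed

lemma vote_prob_le_high:
  assumes f: "f \<in> {f0, f1}" and a: "0 \<le> a" "a < 1" and g: "is_density g"
  shows "vote_prob f0 f1 x a g f \<le> 1 - (1 - a) * cdf f sx"
proof -
  have gm [measurable]: "g \<in> borel_measurable borel" and gi: "integrable lborel g"
    and g1: "integral\<^sup>L lborel g = 1" and gn: "\<And>s. 0 \<le> g s"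
    using g unfolding is_density_def by auto
  have P: "persuaded a g \<in> sets borel" by measurable
  have "(LINT s:persuaded a g|lborel. f s) \<le> (LINT s:{sx..}|lborel. f s)"
    using persuaded_subset_high[of a g, OF a gn] P signal_integrable[OF f] signal_pos[OF f]
    by (intro set_integral_mono_set_lborel) (auto simp: less_imp_le)
  moreover have "(LINT s:persuaded a g|lborel. g s) \<le> 1"
  proof -
    have "0 \<le> (LINT s:- persuaded a g|lborel. g s)" by (rule set_integral_nonneg) (rule gn)
    then show ?thesis using set_integral_add_Compl[OF P gi] g1 by linarith
  qed
  ultimately have "vote_prob f0 f1 x a g f \<le> (1 - a) * (LINT s:{sx..}|lborel. f s) + a * 1"
    unfolding vote_prob_eq[OF gm gi signal_integrable[OF f]] using a
    by (intro add_mono mult_left_mono) simp_all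
  then show ?thesis
    using set_integral_atLeast_eq[OF signal_integrable[OF f]] signal_integral[OF f]
    by (simp add: algebra_simps)
qed

lemma vote_prob_tail_supported:
  assumes f: "f \<in> {f0, f1}" and a: "0 \<le> a" "a < 1" and g: "is_density g"
    and below: "\<And>s. s < sx \<Longrightarrow> g s = 0"
    and above: "\<And>s. sx \<le> s \<Longrightarrow> a * g s \<le> (1 - a) * k s"
  shows "vote_prob f0 f1 x a g f = 1 - (1 - a) * cdf f sx"
proof -
  have gm [measurable]: "g \<in> borel_measurable borel" and gi: "integrable lborel g"
    and g1: "integral\<^sup>L lborel g = 1" and gn: "\<And>s. 0 \<le> g s"
    using g unfolding is_density_def by auto
  have P: "persuaded a g = {sx..}"
  proof (intro set_eqI iffI)
    fix s assume "s \<in> persuaded a g"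
    then show "s \<in> {sx..}" using persuaded_subset_high[of a g, OF a gn] by blast
  next
    fix s assume "s \<in> {sx..}"
    then show "s \<in> persuaded a g" using mem_persuaded_iff_high[of a g s, OF a gn] above by simp
  qed
  have "(\<lambda>s. indicator {sx..} s * g s) = g"
    using below by (auto simp: fun_eq_iff indicator_def)
  then have G: "(LINT s:{sx..}|lborel. g s) = 1"
    using g1 unfolding set_lebesgue_integral_def by simp
  show ?thesis
    unfolding vote_prob_eq[OF gm gi signal_integrable[OF f]] P G
      set_integral_atLeast_eq[OF signal_integrable[OF f]] signal_integral[OF f]
    by (simp add: algebra_simps)
qed

lemma optimal_tail_supported:
  assumes a: "0 \<le> abar" "abar < 1" and g: "is_density g"
    and below: "\<And>s. s < sx \<Longrightarrow> g s = 0"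
    and above: "\<And>s. sx \<le> s \<Longrightarrow> abar * g s \<le> (1 - abar) * k s"
  shows "optimal f0 f1 x abar abar g"
proof -
  have vote: "vote_prob f0 f1 x abar g f = 1 - (1 - abar) * cdf f sx" if "f \<in> {f0, f1}" for f
    using vote_prob_tail_supported[OF that a g below above] .
  have le: "vote_prob f0 f1 x a' g' f \<le> 1 - (1 - a') * cdf f sx"
    if "f \<in> {f0, f1}" "admissible abar a' g'" for f a' g'
    using that a vote_prob_le_high unfolding admissible_def by simp
  show ?thesis
    unfolding optimal_def
  proof (intro conjI allI impI notI)
    show "admissible abar abar g" unfolding admissible_def using a g by simp
    fix a' g' assume adm: "admissible abar a' g'"
    then have "a' \<le> abar" unfolding admissible_def by simp
    then have mono: "(1 - abar) * cdf f sx \<le> (1 - a') * cdf f sx" if "f \<in> {f0, f1}" for f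
      using cdf_signal_pos[OF that, of sx] by (intro mult_right_mono) simp_all
    show "vote_prob f0 f1 x a' g' f0 \<le> vote_prob f0 f1 x abar g f0"
      using le[of f0, OF _ adm] vote[of f0] mono[of f0] by simp
    show "vote_prob f0 f1 x a' g' f1 \<le> vote_prob f0 f1 x abar g f1"
      using le[of f1, OF _ adm] vote[of f1] mono[of f1] by simp
  next
    assume "\<exists>a' g'. admissible abar a' g' \<and> vote_prob f0 f1 x a' g' f0 = vote_prob f0 f1 x abar g f0
      \<and> vote_prob f0 f1 x a' g' f1 = vote_prob f0 f1 x abar g f1 \<and> a' < abar"
    then obtain a' g' where adm: "admissible abar a' g'" and less: "a' < abar"
      and eq: "vote_prob f0 f1 x a' g' f0 = vote_prob f0 f1 x abar g f0" by blast
    have "(1 - abar) * cdf f0 sx < (1 - a') * cdf f0 sx"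
      using less cdf_signal_pos[of f0 sx] by (intro mult_strict_right_mono) simp_all
    then show False using le[of f0, OF _ adm] vote[of f0] eq by simp
  qed
qed

lemma cap_below_tail_kappa':
  assumes "abar < alpha_star f0 f1 x"
  shows "abar < 1" "abar / tail_kappa' < 1 - abar"
proof -
  have "abar < 1" "abar / (1 - abar) < tail_kappa'"
    using cap_below_ratio[OF tail_kappa'_pos] assms by (simp_all add: alpha_star_high)
  then show "abar < 1" "abar / tail_kappa' < 1 - abar"
    using tail_kappa'_pos by (simp_all add: field_simps)
qed

text \<open>The bound on \<open>e\<close> is the room that \<open>abar < alpha_star f0 f1 x\<close> leaves between
  \<open>abar * f_star f0 f1 x = abar / tail_kappa' * k\<close> and the persuasion threshold \<open>(1 - abar) * k\<close>
  above \<open>sx\<close>.\<close>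
lemma optimal_reweighted_f_star:
  assumes cap: "0 \<le> abar" "abar < alpha_star f0 f1 x" and A: "A \<in> sets borel"
    and e: "0 \<le> e" "e \<le> 1 - abar - abar / tail_kappa'"
  shows "optimal f0 f1 x abar abar (\<lambda>s. f_star f0 f1 x s
    * (1 + e * (indicator A s - (LINT t:A|lborel. f_star f0 f1 x t))))"
proof -
  let ?fs = "f_star f0 f1 x"
  define Z where "Z = (LINT t:A|lborel. ?fs t)"
  define q where "q = abar / tail_kappa'"
  have fs: "integrable lborel ?fs" "integral\<^sup>L lborel ?fs = 1" "\<And>s. 0 \<le> ?fs s"
    using density_f_star unfolding is_density_def by auto
  have Z: "0 \<le> Z" "Z \<le> 1"
  proof -
    show "0 \<le> Z" unfolding Z_def using fs(3) by (rule set_integral_nonneg)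
    have "Z \<le> (LINT s:UNIV|lborel. ?fs s)"
      unfolding Z_def using fs A by (intro set_integral_mono_set_lborel) auto
    then show "Z \<le> 1" using fs(2) by (simp add: set_lebesgue_integral_def)
  qed
  have q: "0 \<le> q" "q < 1 - abar"
    unfolding q_def using cap(1) tail_kappa'_pos cap_below_tail_kappa'[OF cap(2)] by simp_all
  have "e * Z \<le> 1" using e q(1) cap(1) Z unfolding q_def by (intro mult_le_one) auto
  then have "is_density (\<lambda>s. ?fs s * (1 + e * (indicator A s - Z)))"
    unfolding Z_def by (rule is_density_reweight[OF density_f_star A e(1)])
  moreover have "abar * (?fs s * (1 + e * (indicator A s - Z))) \<le> (1 - abar) * k s"
    if "sx \<le> s" for s
  proof -
    have "e * (indicator A s - Z) \<le> e * 1"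
      using e(1) Z(1) by (intro mult_left_mono) (auto simp: indicator_def)
    then have "q * (1 + e * (indicator A s - Z)) \<le> q * (1 + (1 - abar - q))"
      using e(2) q(1) unfolding q_def[symmetric] by (intro mult_left_mono) auto
    also have "\<dots> = (1 - abar) - (1 - abar - q) * (1 - q)" by (simp add: algebra_simps)
    also have "\<dots> \<le> 1 - abar"
      using q cap(1) mult_nonneg_nonneg[of "1 - abar - q" "1 - q"] by simp
    finally have "q * (1 + e * (indicator A s - Z)) * k s \<le> (1 - abar) * k s"
      using that kappa'_sign_high(2)[of s] by (intro mult_right_mono) simp_all
    then show ?thesis
      using that unfolding q_def by (simp add: f_star_eq mult.commute mult.left_commute)
  qed
  ultimately show ?thesis
    unfolding Z_def[symmetric] using cap(1) cap_below_tail_kappa'(1)[OF cap(2)]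
    by (intro optimal_tail_supported) (auto simp: f_star_eq)
qed

lemma optimal_f_star:
  assumes "0 \<le> abar" "abar < alpha_star f0 f1 x"
  shows "optimal f0 f1 x abar abar (f_star f0 f1 x)"
  using optimal_reweighted_f_star[OF assms, of "{}" 0] cap_below_tail_kappa'[OF assms(2)] by simp

lemma exists_optimal_not_AE_f_star:
  assumes cap: "0 \<le> abar" "abar < alpha_star f0 f1 x"
  shows "\<exists>g. optimal f0 f1 x abar abar g \<and> \<not> (AE s in lborel. g s = f_star f0 f1 x s)"
proof -
  let ?fs = "f_star f0 f1 x" and ?A = "{sx..sx + 1}"
  define e where "e = 1 - abar - abar / tail_kappa'"
  define Z where "Z = (LINT t:?A|lborel. ?fs t)"
  have fs_pos: "0 < ?fs s" if "sx < s" for s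
    using that tail_kappa'_pos kappa'_sign_high(1)[of s] by (simp add: f_star_eq)
  have e: "0 < e" unfolding e_def using cap_below_tail_kappa'[OF cap(2)] by simp
  moreover have "0 < Z"
    unfolding Z_def using density_f_star fs_pos unfolding is_density_def
    by (intro set_integral_pos_lborel[of _ _ sx "sx + 1"]) auto
  moreover have "?fs s \<noteq> 0" if "sx + 1 < s" for s
    using fs_pos[of s] that by simp
  ultimately have "\<not> (AE s in lborel. ?fs s * (1 + e * (indicator ?A s - Z)) = ?fs s)"
    by (intro not_AE_eq_on_interval[of "sx + 1" "sx + 2"]) auto
  moreover have "optimal f0 f1 x abar abar (\<lambda>s. ?fs s * (1 + e * (indicator ?A s - Z)))"
    unfolding Z_def using e by (intro optimal_reweighted_f_star[OF cap]) (simp_all add: e_def)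
  ultimately show ?thesis by blast
qed

end

theorem proposition5:
  fixes f0 f1 :: "real \<Rightarrow> real" and x abar :: real
  assumes "signal_model f0 f1"
    and "0 < x" and "x < 1" and "x \<noteq> 1/2"
    and "0 \<le> abar" and "abar \<le> 1"
    and "abar < alpha_star f0 f1 x"
  shows "(\<exists>g. optimal f0 f1 x abar abar g)
       \<and> (\<forall>a g. optimal f0 f1 x abar a g \<longrightarrow> a = abar)
       \<and> (x < 1/2 \<and> 0 < abar \<longrightarrow>
            (\<exists>sh. sh < s_star f0 f1 x
                 \<and> optimal f0 f1 x abar abar (f_C f0 f1 x abar sh)
                 \<and> (\<forall>sh'. sh' < s_star f0 f1 x \<and> optimal f0 f1 x abar abar (f_C f0 f1 x abar sh')
                          \<longrightarrow> sh' = sh)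
                 \<and> (\<forall>a g. optimal f0 f1 x abar a g \<longrightarrow>
                          (AE s in lborel. g s = f_C f0 f1 x abar sh s))))
       \<and> (1/2 < x \<longrightarrow>
            optimal f0 f1 x abar abar (f_star f0 f1 x)
          \<and> (\<exists>g. optimal f0 f1 x abar abar g \<and> \<not> (AE s in lborel. g s = f_star f0 f1 x s)))"
proof -
  interpret troll_model f0 f1 x using assms by unfold_locales auto
  consider (low) "x < 1/2" | (high) "1/2 < x" using assms(4) by linarith
  then show ?thesis
  proof cases
    case low
    interpret troll_model_low f0 f1 x using low by unfold_locales
    obtain g where "optimal f0 f1 x abar abar g" using exists_optimal_low[OF assms(5,7)] by blast
    moreover have "\<not> 1/2 < x" using low by simp
    ultimately show ?thesis
      using optimal_same_mass optimal_f_C_unique_cutoff[OF _ assms(7)] low by blast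
  next
    case high
    interpret troll_model_high f0 f1 x using high by unfold_locales
    have "\<not> x < 1/2" using high by simp
    then show ?thesis
      using optimal_same_mass optimal_f_star[OF assms(5,7)] exists_optimal_not_AE_f_star[OF assms(5,7)]
      by blast
  qed
qed

end
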